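(* Let $d\ge1$, $D=\{1,\dots,d\}$, let $\Pi,Q$ be $d\times d$ stochastic matrices indexed by $D$, and let $\mathcal{E}^{(O)}_H:\mathcal{M}_d\otimes\mathcal{M}_d\to\mathcal{M}_d$ be the linear extension of $\mathcal{E}^{(O)}_H(a\otimes b)=\mathcal{E}_H(\mathcal{E}_{H,O}(a\otimes\mathbf{1}_d)\otimes b)$. Then $\mathcal{E}^{(O)}_H$ maps $\mathcal{D}_e\otimes\mathcal{D}_e$ into $\mathcal{D}_e$, where $\mathcal{D}_e=\{\sum_{h\in D}x_he_{hh}:x_h\in\mathbb{C}\}$ is the diagonal subalgebra of $\mathcal{M}_d$.
   Context: $\mathcal{M}_d$: complex $d\times d$ matrices with identity $\mathbf{1}_d$ and matrix units $e_{ij}$; $\diamond$ is the Schur (entrywise) product; stochastic matrices have nonnegative entries and row sums $1$. $P_H(A)=\sum_{i,j,k,l\in D}\sqrt{\Pi_{ik}\Pi_{jl}}\,a_{kl}e_{ij}$, $P_{H,O}(B)=\sum_{i,j,k,l\in D}\sqrt{Q_{ik}Q_{jl}}\,b_{kl}e_{ij}$, $\mathcal{E}_H(a\otimes b)=a\diamond P_H(b)$, $\mathcal{E}_{H,O}(a\otimes b)=a\diamond P_{H,O}(b)$ (extended linearly). *)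

theory Defs
  imports Complex_Main "Jordan_Normal_Form.Matrix"
begin

text \<open>Indices are 0..<d instead of 1..d.\<close>

definition stochastic :: "nat \<Rightarrow> real mat \<Rightarrow> bool" where
  "stochastic d P \<longleftrightarrow> P \<in> carrier_mat d d \<and>
     (\<forall>i<d. \<forall>j<d. 0 \<le> P $$ (i,j)) \<and> (\<forall>i<d. (\<Sum>j<d. P $$ (i,j)) = 1)"

definition schur :: "complex mat \<Rightarrow> complex mat \<Rightarrow> complex mat" where
  "schur A B = mat (dim_row A) (dim_col A) (\<lambda>(i,j). A $$ (i,j) * B $$ (i,j))"

definition P_H :: "nat \<Rightarrow> real mat \<Rightarrow> complex mat \<Rightarrow> complex mat" where
  "P_H d Pm A = mat d d (\<lambda>(i,j). \<Sum>k<d. \<Sum>l<d.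
      complex_of_real (sqrt (Pm $$ (i,k) * Pm $$ (j,l))) * A $$ (k,l))"

definition P_HO :: "nat \<Rightarrow> real mat \<Rightarrow> complex mat \<Rightarrow> complex mat" where
  "P_HO d Q B = mat d d (\<lambda>(i,j). \<Sum>k<d. \<Sum>l<d.
      complex_of_real (sqrt (Q $$ (i,k) * Q $$ (j,l))) * B $$ (k,l))"

definition E_H :: "nat \<Rightarrow> real mat \<Rightarrow> complex mat \<Rightarrow> complex mat \<Rightarrow> complex mat" where
  "E_H d Pm a b = schur a (P_H d Pm b)"

definition E_HO :: "nat \<Rightarrow> real mat \<Rightarrow> complex mat \<Rightarrow> complex mat \<Rightarrow> complex mat" where
  "E_HO d Q a b = schur a (P_HO d Q b)"

definition E_O :: "nat \<Rightarrow> real mat \<Rightarrow> real mat \<Rightarrow> complex mat \<Rightarrow> complex mat \<Rightarrow> complex mat" where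
  "E_O d Pm Q a b = E_H d Pm (E_HO d Q a (1\<^sub>m d)) b"

text \<open>Linear extension, evaluated on a tensor sum_k a_k \<otimes> b_k given by the list of pairs.\<close>
definition E_O_lin :: "nat \<Rightarrow> real mat \<Rightarrow> real mat \<Rightarrow> (complex mat \<times> complex mat) list \<Rightarrow> complex mat" where
  "E_O_lin d Pm Q ts = foldr (\<lambda>(a,b) acc. E_O d Pm Q a b + acc) ts (0\<^sub>m d d)"

definition De :: "nat \<Rightarrow> complex mat set" where
  "De d = {mat d d (\<lambda>(i,j). if i = j then x i else 0) | x. True}"

end

theory Submission
  imports Defs
begin

text \<open>On a simple tensor, E_O(a \<otimes> b) = (a \<diamond> P_HO(\<one>)) \<diamond> P_H(b) is a Schur product whose
  leftmost factor is a. Schur multiplication by a diagonal matrix kills every off-diagonal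
  entry, so the image of a diagonal a is diagonal whatever b, \<Pi> and Q are. As D_e is a subspace, the linear extension
  maps D_e \<otimes> D_e into D_e.\<close>

lemma mem_De_iff:
  "A \<in> De d \<longleftrightarrow> A \<in> carrier_mat d d \<and> (\<forall>i<d. \<forall>j<d. i \<noteq> j \<longrightarrow> A $$ (i,j) = 0)"
proof
  assume "A \<in> De d"
  then show "A \<in> carrier_mat d d \<and> (\<forall>i<d. \<forall>j<d. i \<noteq> j \<longrightarrow> A $$ (i,j) = 0)"
    unfolding De_def by auto
next
  assume A: "A \<in> carrier_mat d d \<and> (\<forall>i<d. \<forall>j<d. i \<noteq> j \<longrightarrow> A $$ (i,j) = 0)"
  then have "A = mat d d (\<lambda>(i,j). if i = j then A $$ (i,i) else 0)"
    by (intro eq_matI) auto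
  then show "A \<in> De d"
    unfolding De_def by (intro CollectI exI[of _ "\<lambda>i. A $$ (i,i)"]) simp
qed

lemma zero_mat_in_De: "0\<^sub>m d d \<in> De d"
  by (auto simp: mem_De_iff)

lemma add_in_De: "A \<in> De d \<Longrightarrow> B \<in> De d \<Longrightarrow> A + B \<in> De d"
  by (auto simp: mem_De_iff)

lemma schur_in_De: "A \<in> De d \<Longrightarrow> schur A B \<in> De d"
  by (auto simp: mem_De_iff schur_def)

lemma E_O_in_De: "a \<in> De d \<Longrightarrow> E_O d Pm Q a b \<in> De d"
  unfolding E_O_def E_H_def E_HO_def by (intro schur_in_De)

lemma E_O_lin_in_De:
  assumes "\<forall>(a,b) \<in> set ts. a \<in> De d"
  shows "E_O_lin d Pm Q ts \<in> De d"
  using assms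
  by (induction ts) (auto simp: E_O_lin_def zero_mat_in_De add_in_De E_O_in_De)

theorem mainTheorem8:
  fixes d :: nat and Pm Q :: "real mat"
  assumes "d \<ge> 1" and "stochastic d Pm" and "stochastic d Q"
  shows "\<forall>ts :: (complex mat \<times> complex mat) list.
           (\<forall>(a,b) \<in> set ts. a \<in> De d \<and> b \<in> De d) \<longrightarrow> E_O_lin d Pm Q ts \<in> De d"
  using E_O_lin_in_De by fast

end
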